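(* Let $OPT$ be the optimal value of Problem (A) and $ALG$ the system throughput of the assignment output by Algorithm 1 (described below). Then $ALG\ge \frac{1}{2}\mu\cdot OPT$, where $\mu$ is defined below with respect to any partition $(C_i)$ as in the definition.
   Context: Setting: SUs $S=\{s_1,\dots,s_N\}$, channels $\{1,\dots,M\}$; SU $s_i$ has integer sensing budget $0\le l_i\le M$, and $\sum_i l_i\ge M$. For each $i,k$ let $P_f^i(k),P_m^i(k)\in[0,1]$; let $T_c\in[0,1)$, $\pi_0(k)\in[0,1]$, $\gamma(k)>0$, $\theta_1(k)=(1-T_c)\pi_0(k)$, $\theta_2(k)=\gamma(k)(1-\pi_0(k))$. For nonempty $A\subseteq S$ and $y\in\{0,1\}^A$ put $P^k_0(y)=\prod_{s_i\in A,y_i=1}P_f^i(k)\prod_{s_i\in A,y_i=0}(1-P_f^i(k))$, $P^k_1(y)=\prod_{s_i\in A,y_i=1}(1-P_m^i(k))\prod_{s_i\in A,y_i=0}P_m^i(k)$, and $U_k(A)=\sum_{y}\max\{\theta_2(k)P^k_1(y),\theta_1(k)P^k_0(y)\}$; $U_k(\emptyset)=\theta_2(k)$. A sensing assignment $(S_1,\dots,S_M)$, $S_k\subseteq S$, is feasible if each $s_i$ lies in at most $l_i$ of the $S_k$. Problem (A): maximize $\sum_k U_k(S_k)$ over feasible assignments. Algorithm 1: Build the complete bipartite graph with vertices $s_i^j$ ($i=1..N$, $j=1..l_i$; copies of SU $s_i$) on one side and channels $c_1,\dots,c_M$ on the other, edge weights $w(s_i^j,c_k)=U_k(\{s_i\})$.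 Compute a maximum weight matching $\mathcal M$; set $S_k=\{s_i:(s_i^j,c_k)\in\mathcal M\}$. For each unmatched copy $s_i^j$ in arbitrary order, add $s_i$ to $S_{k^*}$ where $k^*$ maximizes $U_k(S_k\cup\{s_i\})-U_k(S_k)$ over channels $k$ with $s_i\notin S_k$. Let $U=\sum_k U_k(S_k)$. If $\max_k U_k(S)>U$, instead output the assignment $S_{k^*}=S$ for $k^*=\arg\max_k U_k(S)$ and $S_k=\emptyset$ for $k\ne k^*$; otherwise output $(S_1,\dots,S_M)$. Parameter $\mu$: let $U_k^0=\min_{s_i\in S}U_k(\{s_i\})$, $U_k^*=\max_{s_i\in S}U_k(\{s_i\})$. Partition the channels into groups $C_i$ ($s_i\in S$), each channel $k$ placed in a group $C_i$ with $U_k(\{s_i\})\ge U_k(\{s_j\})$ for all $j\neq i$ (ties broken arbitrarily); $r_i=|C_i|$. Let $C_i^{l_i}$ be the first $\min\{l_i,r_i\}$ channels of $C_i$ when sorted by $U_k^0$ in non-increasing order. For $r_i>0$ let $\lambda_i=\min\{l_i,r_i\}/r_i$ and, when $C_i^{l_i}\ne\emptyset$, $\rho_i=\min_{k\in C_i^{l_i}}U_k^*/U_k^0$. Then $\mu=1+\min_i\lambda_i(\rho_i-1)$ (so $\mu\in[1,2]$). *)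

theory Defs
  imports Main "HOL.Real"
begin

text \<open>SUs are indexed by 0..<N, channels by 0..<M. Sets of SUs are nat sets.
  A vector y in {0,1}^A is encoded by the subset Y of A where y_i = 1.\<close>

definition theta1 :: "real \<Rightarrow> (nat \<Rightarrow> real) \<Rightarrow> nat \<Rightarrow> real" where
  "theta1 Tc pi0 k = (1 - Tc) * pi0 k"

definition theta2 :: "(nat \<Rightarrow> real) \<Rightarrow> (nat \<Rightarrow> real) \<Rightarrow> nat \<Rightarrow> real" where
  "theta2 gamma pi0 k = gamma k * (1 - pi0 k)"

definition P0 :: "(nat \<Rightarrow> nat \<Rightarrow> real) \<Rightarrow> nat \<Rightarrow> nat set \<Rightarrow> nat set \<Rightarrow> real" where
  "P0 Pf k A Y = (\<Prod>i\<in>Y. Pf i k) * (\<Prod>i\<in>A - Y. 1 - Pf i k)"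

definition P1 :: "(nat \<Rightarrow> nat \<Rightarrow> real) \<Rightarrow> nat \<Rightarrow> nat set \<Rightarrow> nat set \<Rightarrow> real" where
  "P1 Pm k A Y = (\<Prod>i\<in>Y. 1 - Pm i k) * (\<Prod>i\<in>A - Y. Pm i k)"

definition Uk :: "(nat \<Rightarrow> nat \<Rightarrow> real) \<Rightarrow> (nat \<Rightarrow> nat \<Rightarrow> real) \<Rightarrow> real \<Rightarrow> (nat \<Rightarrow> real)
    \<Rightarrow> (nat \<Rightarrow> real) \<Rightarrow> nat \<Rightarrow> nat set \<Rightarrow> real" where
  "Uk Pf Pm Tc pi0 gamma k A =
     (if A = {} then theta2 gamma pi0 k
      else (\<Sum>Y\<in>Pow A. max (theta2 gamma pi0 k * P1 Pm k A Y) (theta1 Tc pi0 k * P0 Pf k A Y)))"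

definition total :: "nat \<Rightarrow> (nat \<Rightarrow> nat set \<Rightarrow> real) \<Rightarrow> (nat \<Rightarrow> nat set) \<Rightarrow> real" where
  "total M U S = (\<Sum>k<M. U k (S k))"

definition feasible :: "nat \<Rightarrow> nat \<Rightarrow> (nat \<Rightarrow> nat) \<Rightarrow> (nat \<Rightarrow> nat set) \<Rightarrow> bool" where
  "feasible N M l S \<longleftrightarrow> (\<forall>k<M. S k \<subseteq> {..<N}) \<and> (\<forall>i<N. card {k\<in>{..<M}. i \<in> S k} \<le> l i)"

definition OPT :: "nat \<Rightarrow> nat \<Rightarrow> (nat \<Rightarrow> nat) \<Rightarrow> (nat \<Rightarrow> nat set \<Rightarrow> real) \<Rightarrow> real" where
  "OPT N M l U = Max {total M U S | S. feasible N M l S}"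

definition copies :: "nat \<Rightarrow> (nat \<Rightarrow> nat) \<Rightarrow> (nat \<times> nat) set" where
  "copies N l = {c. fst c < N \<and> snd c < l (fst c)}"

definition is_matching :: "nat \<Rightarrow> nat \<Rightarrow> (nat \<Rightarrow> nat) \<Rightarrow> ((nat \<times> nat) \<times> nat) set \<Rightarrow> bool" where
  "is_matching N M l Mt \<longleftrightarrow>
     Mt \<subseteq> copies N l \<times> {..<M} \<and>
     (\<forall>c k k'. (c, k) \<in> Mt \<and> (c, k') \<in> Mt \<longrightarrow> k = k') \<and>
     (\<forall>c c' k. (c, k) \<in> Mt \<and> (c', k) \<in> Mt \<longrightarrow> c = c')"

definition mweight :: "(nat \<Rightarrow> nat set \<Rightarrow> real) \<Rightarrow> ((nat \<times> nat) \<times> nat) set \<Rightarrow> real" where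
  "mweight U Mt = (\<Sum>(c, k)\<in>Mt. U k {fst c})"

definition max_weight_matching ::
  "nat \<Rightarrow> nat \<Rightarrow> (nat \<Rightarrow> nat) \<Rightarrow> (nat \<Rightarrow> nat set \<Rightarrow> real) \<Rightarrow> ((nat \<times> nat) \<times> nat) set \<Rightarrow> bool" where
  "max_weight_matching N M l U Mt \<longleftrightarrow>
     is_matching N M l Mt \<and> (\<forall>Mt'. is_matching N M l Mt' \<longrightarrow> mweight U Mt' \<le> mweight U Mt)"

definition gain :: "(nat \<Rightarrow> nat set \<Rightarrow> real) \<Rightarrow> (nat \<Rightarrow> nat set) \<Rightarrow> nat \<Rightarrow> nat \<Rightarrow> real" where
  "gain U S i k = U k (insert i (S k)) - U k (S k)"

inductive greedy_run ::
  "nat \<Rightarrow> (nat \<Rightarrow> nat set \<Rightarrow> real) \<Rightarrow> (nat \<Rightarrow> nat set) \<Rightarrow> (nat \<times> nat) list \<Rightarrow> (nat \<Rightarrow> nat set) \<Rightarrow> bool"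
  for M U where
  greedy_nil: "greedy_run M U S [] S"
| greedy_cons: "\<lbrakk> k < M; fst c \<notin> S k;
     \<forall>k'<M. fst c \<notin> S k' \<longrightarrow> gain U S (fst c) k' \<le> gain U S (fst c) k;
     greedy_run M U (S(k := insert (fst c) (S k))) cs S' \<rbrakk>
   \<Longrightarrow> greedy_run M U S (c # cs) S'"

definition alg_output ::
  "nat \<Rightarrow> nat \<Rightarrow> (nat \<Rightarrow> nat) \<Rightarrow> (nat \<Rightarrow> nat set \<Rightarrow> real) \<Rightarrow> (nat \<Rightarrow> nat set) \<Rightarrow> bool" where
  "alg_output N M l U Sout \<longleftrightarrow>
     (\<exists>Mt ord Sg.
        max_weight_matching N M l U Mt \<and>
        distinct ord \<and> set ord = {c \<in> copies N l. \<not> (\<exists>k. (c, k) \<in> Mt)} \<and>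
        greedy_run M U (\<lambda>k. {i. \<exists>j. ((i, j), k) \<in> Mt}) ord Sg \<and>
        (if (\<exists>k<M. U k {..<N} > total M U Sg)
         then (\<exists>ks<M. (\<forall>k<M. U k {..<N} \<le> U ks {..<N}) \<and>
                      Sout = (\<lambda>k. if k = ks then {..<N} else {}))
         else Sout = Sg))"

definition Ustar :: "nat \<Rightarrow> (nat \<Rightarrow> nat set \<Rightarrow> real) \<Rightarrow> nat \<Rightarrow> real" where
  "Ustar N U k = Max ((\<lambda>i. U k {i}) ` {..<N})"

definition Uzero :: "nat \<Rightarrow> (nat \<Rightarrow> nat set \<Rightarrow> real) \<Rightarrow> nat \<Rightarrow> real" where
  "Uzero N U k = Min ((\<lambda>i. U k {i}) ` {..<N})"

text \<open>A partition of channels into groups C_i is given by g: channel k lies in C_(g k).\<close>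

definition grp :: "nat \<Rightarrow> (nat \<Rightarrow> nat) \<Rightarrow> nat \<Rightarrow> nat set" where
  "grp M g i = {k \<in> {..<M}. g k = i}"

definition valid_partition :: "nat \<Rightarrow> nat \<Rightarrow> (nat \<Rightarrow> nat set \<Rightarrow> real) \<Rightarrow> (nat \<Rightarrow> nat) \<Rightarrow> bool" where
  "valid_partition N M U g \<longleftrightarrow> (\<forall>k<M. g k < N \<and> (\<forall>j<N. U k {j} \<le> U k {g k}))"

text \<open>T i = C_i^{l_i}: the first min(l_i, r_i) channels of C_i in a non-increasing order
  of U_k^0 (ties broken arbitrarily).\<close>

definition valid_top ::
  "nat \<Rightarrow> nat \<Rightarrow> (nat \<Rightarrow> nat) \<Rightarrow> (nat \<Rightarrow> nat set \<Rightarrow> real) \<Rightarrow> (nat \<Rightarrow> nat) \<Rightarrow> (nat \<Rightarrow> nat set) \<Rightarrow> bool" where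
  "valid_top N M l U g T \<longleftrightarrow>
     (\<forall>i<N. T i \<subseteq> grp M g i \<and> card (T i) = min (l i) (card (grp M g i)) \<and>
        (\<forall>k\<in>T i. \<forall>k'\<in>grp M g i - T i. Uzero N U k' \<le> Uzero N U k))"

definition lam :: "nat \<Rightarrow> (nat \<Rightarrow> nat) \<Rightarrow> (nat \<Rightarrow> nat) \<Rightarrow> nat \<Rightarrow> real" where
  "lam M l g i = real (min (l i) (card (grp M g i))) / real (card (grp M g i))"

definition rho :: "nat \<Rightarrow> (nat \<Rightarrow> nat set \<Rightarrow> real) \<Rightarrow> (nat \<Rightarrow> nat set) \<Rightarrow> nat \<Rightarrow> real" where
  "rho N U T i = Min ((\<lambda>k. Ustar N U k / Uzero N U k) ` T i)"

definition mu ::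
  "nat \<Rightarrow> nat \<Rightarrow> (nat \<Rightarrow> nat) \<Rightarrow> (nat \<Rightarrow> nat set \<Rightarrow> real) \<Rightarrow> (nat \<Rightarrow> nat) \<Rightarrow> (nat \<Rightarrow> nat set) \<Rightarrow> real" where
  "mu N M l U g T = 1 + Min {(if T i = {} then 0 else lam M l g i * (rho N U T i - 1)) | i.
                              i < N \<and> card (grp M g i) > 0}"

end

theory Submission imports Defs "HOL-Library.FuncSet" begin

text \<open>Every singleton utility satisfies U_k^0 \<ge> max(\<theta>1(k), \<theta>2(k)), while every U_k(A) is at
  most \<theta>1(k) + \<theta>2(k); hence OPT \<le> 2 \<Sum>_k U_k^0. Utilities only grow when SUs are added, so
  neither the greedy phase nor the final comparison with the all-SU assignment decreases the
  throughput: ALG dominates the weight of the maximum matching, hence of every matching.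
  Matching the channels of C_i^{l_i} to copies of s_i, and the remaining channels to spare
  copies, gives weight at least \<Sum>_k U_k^0 + \<Sum>_i \<Sum>_{k \<in> C_i^{l_i}} (U_k^* - U_k^0). Since
  C_i^{l_i} consists of the channels of C_i with the largest U_k^0, its excess is at least
  \<lambda>_i (\<rho>_i - 1) \<Sum>_{k \<in> C_i} U_k^0, so this matching weighs at least \<mu> \<Sum>_k U_k^0 \<ge> \<mu>/2 \<cdot> OPT.\<close>

section \<open>The detection utility\<close>

lemma sum_Pow_insert:
  fixes F :: "'a set \<Rightarrow> 'b::comm_monoid_add"
  assumes "finite A" "i \<notin> A"
  shows "sum F (Pow (insert i A)) = (\<Sum>Y\<in>Pow A. F Y + F (insert i Y))"
proof -
  have "sum F (Pow (insert i A)) = sum F (Pow A) + sum F (insert i ` Pow A)"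
    unfolding Pow_insert by (rule sum.union_disjoint) (use assms in auto)
  also have "sum F (insert i ` Pow A) = (\<Sum>Y\<in>Pow A. F (insert i Y))"
    by (subst sum.reindex) (use assms in \<open>auto intro!: inj_onI simp: o_def\<close>)
  finally show ?thesis by (simp add: sum.distrib)
qed

lemma P1_insert:
  assumes "finite A" "i \<notin> A" "Y \<subseteq> A"
  shows "P1 Pm k (insert i A) Y = Pm i k * P1 Pm k A Y"
    and "P1 Pm k (insert i A) (insert i Y) = (1 - Pm i k) * P1 Pm k A Y"
proof -
  have "finite Y" "i \<notin> Y" using assms finite_subset by blast+
  moreover have "insert i A - Y = insert i (A - Y)" "insert i A - insert i Y = A - Y"
    using assms by auto
  ultimately show "P1 Pm k (insert i A) Y = Pm i k * P1 Pm k A Y"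
    and "P1 Pm k (insert i A) (insert i Y) = (1 - Pm i k) * P1 Pm k A Y"
    unfolding P1_def using assms by simp_all
qed

lemma P0_insert:
  assumes "finite A" "i \<notin> A" "Y \<subseteq> A"
  shows "P0 Pf k (insert i A) Y = (1 - Pf i k) * P0 Pf k A Y"
    and "P0 Pf k (insert i A) (insert i Y) = Pf i k * P0 Pf k A Y"
proof -
  have "finite Y" "i \<notin> Y" using assms finite_subset by blast+
  moreover have "insert i A - Y = insert i (A - Y)" "insert i A - insert i Y = A - Y"
    using assms by auto
  ultimately show "P0 Pf k (insert i A) Y = (1 - Pf i k) * P0 Pf k A Y"
    and "P0 Pf k (insert i A) (insert i Y) = Pf i k * P0 Pf k A Y"
    unfolding P0_def using assms by simp_all
qed

lemma sum_P0: "finite A \<Longrightarrow> sum (P0 Pf k A) (Pow A) = 1"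
  using prod_add[of A "\<lambda>i. Pf i k" "\<lambda>i. 1 - Pf i k"] unfolding P0_def by simp

lemma sum_P1: "finite A \<Longrightarrow> sum (P1 Pm k A) (Pow A) = 1"
  using prod_add[of A "\<lambda>i. 1 - Pm i k" "\<lambda>i. Pm i k"] unfolding P1_def by simp

lemma P0_nonneg: "\<forall>i\<in>A. Pf i k \<le> 1 \<Longrightarrow> \<forall>i\<in>A. 0 \<le> Pf i k \<Longrightarrow> Y \<subseteq> A \<Longrightarrow> 0 \<le> P0 Pf k A Y"
  unfolding P0_def by (intro mult_nonneg_nonneg prod_nonneg) auto

lemma P1_nonneg: "\<forall>i\<in>A. Pm i k \<le> 1 \<Longrightarrow> \<forall>i\<in>A. 0 \<le> Pm i k \<Longrightarrow> Y \<subseteq> A \<Longrightarrow> 0 \<le> P1 Pm k A Y"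
  unfolding P1_def by (intro mult_nonneg_nonneg prod_nonneg) auto

lemma Uk_singleton:
  "Uk Pf Pm Tc pi0 gamma k {i} =
     max (theta2 gamma pi0 k * Pm i k) (theta1 Tc pi0 k * (1 - Pf i k))
   + max (theta2 gamma pi0 k * (1 - Pm i k)) (theta1 Tc pi0 k * Pf i k)"
  unfolding Uk_def P0_def P1_def by (simp add: Pow_insert)

lemma Uk_singleton_ge_theta:
  "theta1 Tc pi0 k \<le> Uk Pf Pm Tc pi0 gamma k {i}"
  "theta2 gamma pi0 k \<le> Uk Pf Pm Tc pi0 gamma k {i}"
  unfolding Uk_singleton by (simp_all add: max_def algebra_simps)

text \<open>Adding an SU splits each observation \<open>y\<close> into two, and the maximum of a sum is at
  most the sum of the maxima.\<close>

lemma Uk_insert_ge: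
  assumes "finite A"
  shows "Uk Pf Pm Tc pi0 gamma k A \<le> Uk Pf Pm Tc pi0 gamma k (insert i A)"
proof (cases "i \<in> A")
  case False
  let ?t1 = "theta1 Tc pi0 k" and ?t2 = "theta2 gamma pi0 k"
  show ?thesis
  proof (cases "A = {}")
    case True
    then show ?thesis using Uk_singleton_ge_theta(2) unfolding Uk_def by simp
  next
    case nonempty: False
    have "(\<Sum>Y\<in>Pow A. max (?t2 * P1 Pm k A Y) (?t1 * P0 Pf k A Y))
        \<le> (\<Sum>Y\<in>Pow A. max (?t2 * (Pm i k * P1 Pm k A Y)) (?t1 * ((1 - Pf i k) * P0 Pf k A Y))
            + max (?t2 * ((1 - Pm i k) * P1 Pm k A Y)) (?t1 * (Pf i k * P0 Pf k A Y)))"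
      by (rule sum_mono) (simp add: max_def algebra_simps)
    also have "\<dots> = (\<Sum>Y\<in>Pow A. max (?t2 * P1 Pm k (insert i A) Y) (?t1 * P0 Pf k (insert i A) Y)
        + max (?t2 * P1 Pm k (insert i A) (insert i Y)) (?t1 * P0 Pf k (insert i A) (insert i Y)))"
      by (rule sum.cong) (use assms False P1_insert P0_insert in auto)
    also have "\<dots> = Uk Pf Pm Tc pi0 gamma k (insert i A)"
      unfolding Uk_def by (simp add: sum_Pow_insert[OF assms False])
    finally show ?thesis unfolding Uk_def using nonempty by simp
  qed
qed (simp add: insert_absorb)

lemma Uk_ge_theta2: "finite A \<Longrightarrow> theta2 gamma pi0 k \<le> Uk Pf Pm Tc pi0 gamma k A"
proof (induction A rule: finite_induct)
  case empty
  then show ?case unfolding Uk_def by simp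
next
  case (insert i A)
  then show ?case using Uk_insert_ge[OF insert(1), of Pf Pm Tc pi0 gamma k i] by linarith
qed

lemma Uk_le_theta1_add_theta2:
  assumes "finite A" "\<forall>i\<in>A. 0 \<le> Pf i k \<and> Pf i k \<le> 1" "\<forall>i\<in>A. 0 \<le> Pm i k \<and> Pm i k \<le> 1"
    "0 \<le> theta1 Tc pi0 k" "0 \<le> theta2 gamma pi0 k"
  shows "Uk Pf Pm Tc pi0 gamma k A \<le> theta1 Tc pi0 k + theta2 gamma pi0 k"
proof (cases "A = {}")
  case False
  let ?t1 = "theta1 Tc pi0 k" and ?t2 = "theta2 gamma pi0 k"
  have "(\<Sum>Y\<in>Pow A. max (?t2 * P1 Pm k A Y) (?t1 * P0 Pf k A Y))
      \<le> (\<Sum>Y\<in>Pow A. ?t2 * P1 Pm k A Y + ?t1 * P0 Pf k A Y)"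
    using assms P0_nonneg[of A Pf k] P1_nonneg[of A Pm k] by (intro sum_mono) (simp add: max_def)
  also have "\<dots> = ?t2 * sum (P1 Pm k A) (Pow A) + ?t1 * sum (P0 Pf k A) (Pow A)"
    by (simp add: sum.distrib sum_distrib_left)
  also have "\<dots> = ?t1 + ?t2" using sum_P0 sum_P1 assms(1) by simp
  finally show ?thesis unfolding Uk_def using False by simp
qed (use assms in \<open>simp add: Uk_def\<close>)

lemma theta1_nonneg: "0 \<le> Tc \<Longrightarrow> Tc < 1 \<Longrightarrow> 0 \<le> pi0 k \<Longrightarrow> 0 \<le> theta1 Tc pi0 k"
  unfolding theta1_def by simp

lemma theta2_nonneg: "0 < gamma k \<Longrightarrow> pi0 k \<le> 1 \<Longrightarrow> 0 \<le> theta2 gamma pi0 k"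
  unfolding theta2_def by simp

lemma max_theta_pos:
  assumes "Tc < 1" "0 \<le> pi0 k" "0 < gamma k"
  shows "0 < max (theta1 Tc pi0 k) (theta2 gamma pi0 k)"
proof (cases "pi0 k = 0")
  case True
  then show ?thesis unfolding theta2_def using assms by (simp add: less_max_iff_disj)
next
  case False
  then show ?thesis unfolding theta1_def using assms by (simp add: less_max_iff_disj)
qed

lemma max_theta_le_Uzero:
  "0 < N \<Longrightarrow> max (theta1 Tc pi0 k) (theta2 gamma pi0 k) \<le> Uzero N (Uk Pf Pm Tc pi0 gamma) k"
  unfolding Uzero_def using Uk_singleton_ge_theta by (subst Min_ge_iff) auto

lemma Uk_le_two_Uzero:
  assumes "A \<subseteq> {..<N}" "0 < N"
    and "\<forall>i<N. 0 \<le> Pf i k \<and> Pf i k \<le> 1" "\<forall>i<N. 0 \<le> Pm i k \<and> Pm i k \<le> 1"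
    and "0 \<le> Tc" "Tc < 1" "0 \<le> pi0 k" "pi0 k \<le> 1" "0 < gamma k"
  shows "Uk Pf Pm Tc pi0 gamma k A \<le> 2 * Uzero N (Uk Pf Pm Tc pi0 gamma) k"
proof -
  have "Uk Pf Pm Tc pi0 gamma k A \<le> theta1 Tc pi0 k + theta2 gamma pi0 k"
    using assms theta1_nonneg theta2_nonneg finite_subset[OF assms(1)]
    by (intro Uk_le_theta1_add_theta2) auto
  then show ?thesis using max_theta_le_Uzero[OF assms(2), of Tc pi0 k gamma Pf Pm] by linarith
qed

section \<open>Throughput of the algorithm\<close>

lemma greedy_run_total_mono:
  assumes "greedy_run M U S cs S'"
    and mono: "\<And>k A i. k < M \<Longrightarrow> finite A \<Longrightarrow> U k A \<le> U k (insert i A)"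
    and "\<forall>k<M. finite (S k)"
  shows "total M U S \<le> total M U S'"
  using assms(1,3)
proof (induction rule: greedy_run.induct)
  case (greedy_cons k c S cs S')
  let ?S = "S(k := insert (fst c) (S k))"
  have "total M U S \<le> total M U ?S"
    unfolding total_def using greedy_cons.prems mono by (intro sum_mono) auto
  also have "\<dots> \<le> total M U S'"
    using greedy_cons.prems by (intro greedy_cons.IH) auto
  finally show ?case .
qed simp

lemma finite_copies: "finite (copies N l)"
proof -
  have "copies N l = Sigma {..<N} (\<lambda>i. {..<l i})" unfolding copies_def by auto
  then show ?thesis by simp
qed

lemma card_copies: "card (copies N l) = (\<Sum>i<N. l i)"
proof -
  have "copies N l = Sigma {..<N} (\<lambda>i. {..<l i})" unfolding copies_def by auto
  then show ?thesis by simp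
qed

lemma mweight_le_total_matched:
  assumes "is_matching N M l Mt"
    and nonneg: "\<And>k A. k < M \<Longrightarrow> finite A \<Longrightarrow> 0 \<le> U k A"
  shows "mweight U Mt \<le> total M U (\<lambda>k. {i. \<exists>j. ((i, j), k) \<in> Mt})"
proof -
  define S where "S k = {i. \<exists>j. ((i, j), k) \<in> Mt}" for k
  have Mt: "Mt \<subseteq> copies N l \<times> {..<M}" using assms(1) unfolding is_matching_def by blast
  have S_singleton: "S (snd p) = {fst (fst p)}" if "p \<in> Mt" for p
  proof -
    obtain i j k where p: "p = ((i, j), k)" by (metis prod.collapse)
    have "S k = {i}"
      using assms(1) that unfolding p S_def is_matching_def by blast
    then show ?thesis using p by simp
  qed
  have "inj_on snd Mt"
    using assms(1) unfolding is_matching_def inj_on_def by (metis prod.collapse)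
  have "mweight U Mt = (\<Sum>p\<in>Mt. U (snd p) (S (snd p)))"
    unfolding mweight_def by (rule sum.cong) (auto simp: S_singleton)
  also have "\<dots> = (\<Sum>k\<in>snd ` Mt. U k (S k))"
    using sum.reindex[OF \<open>inj_on snd Mt\<close>, of "\<lambda>k. U k (S k)"] by simp
  also have "\<dots> \<le> (\<Sum>k<M. U k (S k))"
  proof (rule sum_mono2)
    have "S k \<subseteq> {..<N}" for k using Mt unfolding S_def copies_def by auto
    then have "finite (S k)" for k by (rule finite_subset) simp
    then show "\<And>k. k \<in> {..<M} - snd ` Mt \<Longrightarrow> 0 \<le> U k (S k)"
      using nonneg by simp
  qed (use Mt in auto)
  finally show ?thesis unfolding total_def S_def .
qed

lemma alg_output_ge_matching:
  assumes alg: "alg_output N M l U Sout" and "is_matching N M l Mt'"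
    and nonneg: "\<And>k A. k < M \<Longrightarrow> finite A \<Longrightarrow> 0 \<le> U k A"
    and mono: "\<And>k A i. k < M \<Longrightarrow> finite A \<Longrightarrow> U k A \<le> U k (insert i A)"
  shows "mweight U Mt' \<le> total M U Sout"
proof -
  obtain Mt ord Sg where Mt: "max_weight_matching N M l U Mt"
    and greedy: "greedy_run M U (\<lambda>k. {i. \<exists>j. ((i, j), k) \<in> Mt}) ord Sg"
    and out: "if (\<exists>k<M. U k {..<N} > total M U Sg)
         then (\<exists>ks<M. (\<forall>k<M. U k {..<N} \<le> U ks {..<N}) \<and>
                      Sout = (\<lambda>k. if k = ks then {..<N} else {}))
         else Sout = Sg"
    using alg unfolding alg_output_def by blast
  have matching: "is_matching N M l Mt" using Mt unfolding max_weight_matching_def by blast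
  have "mweight U Mt' \<le> mweight U Mt"
    using Mt assms(2) unfolding max_weight_matching_def by blast
  also have "\<dots> \<le> total M U (\<lambda>k. {i. \<exists>j. ((i, j), k) \<in> Mt})"
    using matching nonneg by (rule mweight_le_total_matched)
  also have "\<dots> \<le> total M U Sg"
  proof (rule greedy_run_total_mono[OF greedy mono])
    have "{i. \<exists>j. ((i, j), k) \<in> Mt} \<subseteq> {..<N}" for k
      using matching unfolding is_matching_def copies_def by auto
    then show "\<forall>k<M. finite {i. \<exists>j. ((i, j), k) \<in> Mt}"
      by (metis finite_lessThan finite_subset)
  qed
  also have "\<dots> \<le> total M U Sout"
  proof (cases "\<exists>k<M. U k {..<N} > total M U Sg")
    case True
    then obtain k0 ks where "k0 < M" "total M U Sg < U k0 {..<N}" "ks < M"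
      "U k0 {..<N} \<le> U ks {..<N}" and Sout: "Sout = (\<lambda>k. if k = ks then {..<N} else {})"
      using out by auto
    moreover have "U ks (Sout ks) \<le> total M U Sout"
      unfolding total_def using \<open>ks < M\<close> nonneg Sout by (intro member_le_sum) auto
    ultimately show ?thesis by simp
  qed (use out in simp)
  finally show ?thesis .
qed

lemma OPT_le_sum_bound:
  assumes "\<And>k A. k < M \<Longrightarrow> A \<subseteq> {..<N} \<Longrightarrow> U k A \<le> B k"
  shows "OPT N M l U \<le> (\<Sum>k<M. B k)"
proof -
  let ?X = "{total M U S | S. feasible N M l S}"
  have "?X \<subseteq> total M U ` PiE {..<M} (\<lambda>_. Pow {..<N})"
  proof
    fix x assume "x \<in> ?X"
    then obtain S where S: "x = total M U S" "feasible N M l S" by auto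
    have "total M U (restrict S {..<M}) = x" unfolding total_def S(1) by simp
    moreover have "restrict S {..<M} \<in> PiE {..<M} (\<lambda>_. Pow {..<N})"
      using S(2) unfolding feasible_def by auto
    ultimately show "x \<in> total M U ` PiE {..<M} (\<lambda>_. Pow {..<N})" by blast
  qed
  then have "finite ?X" by (rule finite_subset) (auto intro: finite_PiE)
  moreover have "total M U (\<lambda>_. {}) \<in> ?X" unfolding feasible_def by auto
  moreover have "x \<le> (\<Sum>k<M. B k)" if "x \<in> ?X" for x
    using that assms unfolding feasible_def total_def by (auto intro!: sum_mono)
  ultimately show ?thesis unfolding OPT_def by (subst Max_le_iff) auto
qed

section \<open>A matching of large weight\<close>

lemma inj_on_extend:
  assumes "inj_on f A" "f ` A \<subseteq> B" "A \<subseteq> X" "finite X" "finite B" "card X \<le> card B"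
  shows "\<exists>h. inj_on h X \<and> h ` X \<subseteq> B \<and> (\<forall>x\<in>A. h x = f x)"
proof -
  have "finite A" using assms(3,4) by (rule finite_subset)
  then have "card (X - A) \<le> card (B - f ` A)"
    using assms card_Diff_subset[of A X] card_Diff_subset[of "f ` A" B] card_image[OF assms(1)]
    by simp
  then obtain f' where f': "inj_on f' (X - A)" "f' ` (X - A) \<subseteq> B - f ` A"
    using card_le_inj[of "X - A" "B - f ` A"] assms(4,5) by auto
  define h where "h x = (if x \<in> A then f x else f' x)" for x
  have "inj_on h (A \<union> (X - A))"
  proof (subst inj_on_Un, intro conjI)
    show "inj_on h A" using assms(1) by (rule inj_on_cong[THEN iffD1, rotated]) (simp add: h_def)
    show "inj_on h (X - A)" using f'(1) by (rule inj_on_cong[THEN iffD1, rotated]) (simp add: h_def)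
    show "h ` (A - (X - A)) \<inter> h ` (X - A - A) = {}" using f'(2) by (auto simp: h_def)
  qed
  moreover have "A \<union> (X - A) = X" using assms(3) by blast
  ultimately have "inj_on h X" by simp
  moreover have "h ` X \<subseteq> B" using assms(2) f'(2) by (auto simp: h_def)
  ultimately show ?thesis by (intro exI[of _ h]) (simp add: h_def)
qed

lemma exists_channel_copy_assignment:
  assumes l_sum: "M \<le> (\<Sum>i<N. l i)"
    and g: "\<forall>k<M. g k < N"
    and T: "\<forall>i<N. T i \<subseteq> grp M g i \<and> card (T i) \<le> l i"
  shows "\<exists>h. inj_on h {..<M} \<and> h ` {..<M} \<subseteq> copies N l \<and> (\<forall>k\<in>(\<Union>i<N. T i). fst (h k) = g k)"
proof -
  define TT where "TT = (\<Union>i<N. T i)"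
  have "\<exists>f. f ` T i \<subseteq> {i} \<times> {..<l i} \<and> inj_on f (T i)" if "i < N" for i
  proof (rule card_le_inj)
    show "finite (T i)" using T that finite_subset[of "T i" "{..<M}"] unfolding grp_def by auto
  qed (use T that in \<open>simp_all add: card_cartesian_product\<close>)
  then obtain F where F: "\<And>i. i < N \<Longrightarrow> F i ` T i \<subseteq> {i} \<times> {..<l i} \<and> inj_on (F i) (T i)"
    by metis
  define f where "f k = F (g k) k" for k
  have TT_grp: "k \<in> T (g k)" "g k < N" if "k \<in> TT" for k
    using that T unfolding TT_def grp_def by auto
  have f_copy: "f k \<in> {g k} \<times> {..<l (g k)}" if "k \<in> TT" for k
    using F TT_grp[OF that] unfolding f_def by blast
  have "inj_on f TT"
  proof (rule inj_onI)
    fix k k' assume k: "k \<in> TT" "k' \<in> TT" "f k = f k'"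
    have "g k = g k'" using f_copy[OF k(1)] f_copy[OF k(2)] k(3) by auto
    then show "k = k'" using F TT_grp k unfolding f_def inj_on_def by metis
  qed
  moreover have "f ` TT \<subseteq> copies N l" using f_copy TT_grp unfolding copies_def by fastforce
  moreover have "TT \<subseteq> {..<M}" using T unfolding TT_def grp_def by auto
  moreover have "card {..<M} \<le> card (copies N l)" using l_sum by (simp add: card_copies)
  ultimately obtain h where "inj_on h {..<M}" "h ` {..<M} \<subseteq> copies N l" "\<forall>k\<in>TT. h k = f k"
    using inj_on_extend[of f TT "copies N l" "{..<M}"] finite_copies by auto
  moreover have "\<forall>k\<in>TT. fst (f k) = g k" using f_copy by (simp add: mem_Times_iff)
  ultimately show ?thesis unfolding TT_def by auto
qed

lemma Ustar_eq_partition: "valid_partition N M U g \<Longrightarrow> k < M \<Longrightarrow> Ustar N U k = U k {g k}"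
  unfolding Ustar_def valid_partition_def by (intro Max_eqI) auto

lemma Uzero_le: "i < N \<Longrightarrow> Uzero N U k \<le> U k {i}"
  unfolding Uzero_def by (intro Min_le) auto

lemma Uzero_le_Ustar: "0 < N \<Longrightarrow> Uzero N U k \<le> Ustar N U k"
  unfolding Uzero_def Ustar_def by (meson Max_ge Min_le finite_imageI finite_lessThan image_eqI lessThan_iff order_trans)

lemma top_subset_average_ge:
  fixes z :: "'a \<Rightarrow> real"
  assumes "finite G" "T \<subseteq> G" "\<forall>k\<in>T. \<forall>k'\<in>G - T. z k' \<le> z k"
  shows "real (card T) * sum z G \<le> real (card G) * sum z T"
proof -
  have "finite T" using assms finite_subset by blast
  have "real (card T) * sum z (G - T) = (\<Sum>k\<in>T. \<Sum>k'\<in>G - T. z k')"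
    by (simp add: sum_distrib_left)
  also have "\<dots> \<le> (\<Sum>k\<in>T. \<Sum>k'\<in>G - T. z k)"
    by (intro sum_mono) (use assms in auto)
  also have "\<dots> = real (card (G - T)) * sum z T"
    by (simp add: sum_distrib_right mult.commute)
  finally have "real (card T) * sum z (G - T) \<le> real (card (G - T)) * sum z T" .
  moreover have "sum z G = sum z T + sum z (G - T)"
    using assms by (metis add.commute sum.subset_diff)
  moreover have "card G = card T + card (G - T)"
    using assms \<open>finite T\<close> by (metis card_Diff_subset le_add_diff_inverse card_mono)
  ultimately show ?thesis by (simp add: algebra_simps)
qed

lemma top_subset_excess_ge:
  fixes z s :: "'a \<Rightarrow> real"
  assumes "finite G" "T \<subseteq> G" "T \<noteq> {}" "\<forall>k\<in>T. \<forall>k'\<in>G - T. z k' \<le> z k"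
    and "\<forall>k\<in>G. 0 < z k" "\<forall>k\<in>T. z k \<le> s k"
  shows "real (card T) / real (card G) * (Min ((\<lambda>k. s k / z k) ` T) - 1) * sum z G
           \<le> (\<Sum>k\<in>T. s k - z k)"
proof -
  define \<rho> where "\<rho> = Min ((\<lambda>k. s k / z k) ` T)"
  have "finite T" using assms finite_subset by blast
  have "0 < card G" using assms card_gt_0_iff by blast
  have "1 \<le> \<rho>" unfolding \<rho>_def using \<open>finite T\<close> assms by (subst Min_ge_iff) auto
  have "real (card T) / real (card G) * (\<rho> - 1) * sum z G
      = (\<rho> - 1) * (real (card T) * sum z G) / real (card G)" by simp
  also have "\<dots> \<le> (\<rho> - 1) * (real (card G) * sum z T) / real (card G)"
    using top_subset_average_ge[OF assms(1,2,4)] \<open>1 \<le> \<rho>\<close>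
    by (intro divide_right_mono mult_left_mono) auto
  also have "\<dots> = (\<rho> - 1) * sum z T" using \<open>0 < card G\<close> by simp
  also have "\<dots> = (\<Sum>k\<in>T. (\<rho> - 1) * z k)" by (simp add: sum_distrib_left)
  also have "\<dots> \<le> (\<Sum>k\<in>T. s k - z k)"
  proof (rule sum_mono)
    fix k assume "k \<in> T"
    then have "\<rho> \<le> s k / z k" "0 < z k" unfolding \<rho>_def using \<open>finite T\<close> assms by auto
    then show "(\<rho> - 1) * z k \<le> s k - z k" by (simp add: pos_le_divide_eq algebra_simps)
  qed
  finally show ?thesis unfolding \<rho>_def .
qed

lemma mu_le_coefficient:
  assumes "i < N" "grp M g i \<noteq> {}"
  shows "mu N M l U g T \<le> 1 + (if T i = {} then 0 else lam M l g i * (rho N U T i - 1))"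
proof -
  let ?c = "\<lambda>i. if T i = {} then 0 else lam M l g i * (rho N U T i - 1)"
  have "finite {?c i | i. i < N \<and> card (grp M g i) > 0}"
    by (rule finite_subset[of _ "?c ` {..<N}"]) auto
  moreover have "0 < card (grp M g i)" using assms(2) by (simp add: grp_def card_gt_0_iff)
  ultimately have "Min {?c i | i. i < N \<and> card (grp M g i) > 0} \<le> ?c i"
    using assms(1) by (intro Min_le) auto
  then show ?thesis unfolding mu_def by simp
qed

lemma rho_ge_one:
  assumes "finite (T i)" "T i \<noteq> {}" "\<forall>k\<in>T i. 0 < Uzero N U k \<and> Uzero N U k \<le> Ustar N U k"
  shows "1 \<le> rho N U T i"
  unfolding rho_def using assms by (subst Min_ge_iff) auto

lemma valid_top_subset:
  "valid_top N M l U g T \<Longrightarrow> i < N \<Longrightarrow> T i \<subseteq> {..<M}"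
  unfolding valid_top_def grp_def by auto

lemma mu_ge_one:
  assumes "0 < M" and part: "valid_partition N M U g" and top: "valid_top N M l U g T"
    and Uzero_pos: "\<forall>k<M. 0 < Uzero N U k"
  shows "1 \<le> mu N M l U g T"
proof -
  let ?c = "\<lambda>i. if T i = {} then 0 else lam M l g i * (rho N U T i - 1)"
  let ?C = "{?c i | i. i < N \<and> card (grp M g i) > 0}"
  have "g 0 < N" "0 \<in> grp M g (g 0)" using part \<open>0 < M\<close> unfolding valid_partition_def grp_def by auto
  then have "?C \<noteq> {}" by (auto simp: grp_def card_gt_0_iff)
  moreover have "finite ?C" by (rule finite_subset[of _ "?c ` {..<N}"]) auto
  moreover have "0 \<le> ?c i" if "i < N" for i
  proof (cases "T i = {}")
    case False
    have "T i \<subseteq> {..<M}" using top that by (rule valid_top_subset)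
    moreover from this have "finite (T i)" by (rule finite_subset) simp
    moreover have "0 < N" using \<open>g 0 < N\<close> by simp
    ultimately have "1 \<le> rho N U T i"
      using False Uzero_pos Uzero_le_Ustar by (intro rho_ge_one) auto
    then show ?thesis using False unfolding lam_def by simp
  qed simp
  then have "\<forall>x\<in>?C. 0 \<le> x" by blast
  ultimately have "0 \<le> Min ?C" by (subst Min_ge_iff) auto
  then show ?thesis unfolding mu_def by simp
qed

lemma mu_excess_bound:
  assumes part: "valid_partition N M U g" and top: "valid_top N M l U g T"
    and Uzero_pos: "\<forall>k<M. 0 < Uzero N U k"
  shows "(mu N M l U g T - 1) * (\<Sum>k<M. Uzero N U k)
           \<le> (\<Sum>k\<in>(\<Union>i<N. T i). Ustar N U k - Uzero N U k)"
proof -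
  let ?Z = "Uzero N U" and ?s = "Ustar N U"
  have g: "\<forall>k<M. g k < N" using part unfolding valid_partition_def by blast
  have T: "T i \<subseteq> grp M g i" "card (T i) = min (l i) (card (grp M g i))"
    "\<forall>k\<in>T i. \<forall>k'\<in>grp M g i - T i. ?Z k' \<le> ?Z k" if "i < N" for i
    using top that unfolding valid_top_def by blast+
  have fin_grp: "finite (grp M g i)" for i unfolding grp_def by simp
  have "{..<M} = (\<Union>i<N. grp M g i)" using g unfolding grp_def by auto
  then have sum_Z: "(\<Sum>k<M. ?Z k) = (\<Sum>i<N. \<Sum>k\<in>grp M g i. ?Z k)"
    by (simp only:) (rule sum.UNION_disjoint, auto simp: grp_def)
  have sum_excess: "(\<Sum>k\<in>(\<Union>i<N. T i). ?s k - ?Z k) = (\<Sum>i<N. \<Sum>k\<in>T i. ?s k - ?Z k)"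
  proof (rule sum.UNION_disjoint)
    show "\<forall>i\<in>{..<N}. finite (T i)" using T(1) fin_grp finite_subset by blast
    show "\<forall>i\<in>{..<N}. \<forall>j\<in>{..<N}. i \<noteq> j \<longrightarrow> T i \<inter> T j = {}"
      using T(1) unfolding grp_def by blast
  qed simp
  have "(mu N M l U g T - 1) * sum ?Z (grp M g i) \<le> (\<Sum>k\<in>T i. ?s k - ?Z k)" if "i < N" for i
  proof (cases "T i = {}")
    case True
    have "0 \<le> sum ?Z (grp M g i)" using Uzero_pos by (intro sum_nonneg) (auto simp: grp_def less_imp_le)
    moreover have "grp M g i \<noteq> {} \<Longrightarrow> mu N M l U g T - 1 \<le> 0"
      using mu_le_coefficient[OF that, where M=M and g=g and l=l and U=U and T=T] True by simp
    ultimately show ?thesis using True by (cases "grp M g i = {}") (auto simp: mult_nonpos_nonneg)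
  next
    case False
    then have "grp M g i \<noteq> {}" using T(1)[OF that] by blast
    then have "mu N M l U g T - 1
        \<le> real (card (T i)) / real (card (grp M g i)) * (Min ((\<lambda>k. ?s k / ?Z k) ` T i) - 1)"
      using mu_le_coefficient[OF that, where M=M and g=g and l=l and U=U and T=T] False T(2)[OF that] unfolding lam_def rho_def by simp
    moreover have "0 \<le> sum ?Z (grp M g i)"
      using Uzero_pos by (intro sum_nonneg) (auto simp: grp_def less_imp_le)
    ultimately have "(mu N M l U g T - 1) * sum ?Z (grp M g i)
        \<le> real (card (T i)) / real (card (grp M g i)) * (Min ((\<lambda>k. ?s k / ?Z k) ` T i) - 1)
            * sum ?Z (grp M g i)"
      by (rule mult_right_mono)
    also have "\<dots> \<le> (\<Sum>k\<in>T i. ?s k - ?Z k)"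
    proof (rule top_subset_excess_ge[OF fin_grp T(1)[OF that] False T(3)[OF that]])
      show "\<forall>k\<in>grp M g i. 0 < ?Z k" using Uzero_pos unfolding grp_def by auto
      show "\<forall>k\<in>T i. ?Z k \<le> ?s k" using Uzero_le_Ustar that by auto
    qed
    finally show ?thesis .
  qed
  then show ?thesis unfolding sum_Z sum_excess sum_distrib_left by (intro sum_mono) auto
qed

lemma exists_matching_weight_ge_mu:
  assumes l_sum: "M \<le> (\<Sum>i<N. l i)"
    and part: "valid_partition N M U g" and top: "valid_top N M l U g T"
    and Uzero_pos: "\<forall>k<M. 0 < Uzero N U k"
  shows "\<exists>Mt. is_matching N M l Mt \<and> mu N M l U g T * (\<Sum>k<M. Uzero N U k) \<le> mweight U Mt"
proof -
  let ?Z = "Uzero N U" and ?s = "Ustar N U" and ?TT = "\<Union>i<N. T i"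
  have g: "\<forall>k<M. g k < N" using part unfolding valid_partition_def by blast
  have "\<forall>i<N. T i \<subseteq> grp M g i \<and> card (T i) \<le> l i" using top unfolding valid_top_def by auto
  then obtain h where h: "inj_on h {..<M}" "h ` {..<M} \<subseteq> copies N l" "\<forall>k\<in>?TT. fst (h k) = g k"
    using exists_channel_copy_assignment[OF l_sum g] by blast
  define Mt where "Mt = (\<lambda>k. (h k, k)) ` {..<M}"
  have "is_matching N M l Mt"
    unfolding is_matching_def Mt_def using h(1,2) unfolding inj_on_def
    by (auto, metis prod.inject, metis prod.inject)
  have TT: "?TT \<subseteq> {..<M}" using top valid_top_subset by blast
  have "mu N M l U g T * (\<Sum>k<M. ?Z k) = (\<Sum>k<M. ?Z k) + (mu N M l U g T - 1) * (\<Sum>k<M. ?Z k)"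
    by (simp add: algebra_simps)
  also have "\<dots> \<le> (\<Sum>k<M. ?Z k) + (\<Sum>k\<in>?TT. ?s k - ?Z k)"
    using mu_excess_bound[OF part top Uzero_pos] by simp
  also have "\<dots> = (\<Sum>k\<in>{..<M} - ?TT. ?Z k) + (\<Sum>k\<in>?TT. ?s k)"
    using sum.subset_diff[OF TT, of ?Z] by (simp add: sum_subtractf)
  also have "\<dots> \<le> (\<Sum>k\<in>{..<M} - ?TT. U k {fst (h k)}) + (\<Sum>k\<in>?TT. U k {fst (h k)})"
  proof (intro add_mono sum_mono)
    fix k assume "k \<in> {..<M} - ?TT"
    then have "fst (h k) < N" using h(2) unfolding copies_def by auto
    then show "?Z k \<le> U k {fst (h k)}" by (rule Uzero_le)
  next
    fix k assume "k \<in> ?TT"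
    then show "?s k \<le> U k {fst (h k)}" using h(3) TT Ustar_eq_partition[OF part] by auto
  qed
  also have "\<dots> = (\<Sum>k<M. U k {fst (h k)})"
    using sum.subset_diff[OF TT, of "\<lambda>k. U k {fst (h k)}"] by simp
  also have "\<dots> = mweight U Mt"
    unfolding mweight_def Mt_def by (subst sum.reindex) (auto intro: inj_onI)
  finally show ?thesis using \<open>is_matching N M l Mt\<close> by blast
qed

theorem proposition2:
  fixes N M :: nat and l :: "nat \<Rightarrow> nat"
    and Pf Pm :: "nat \<Rightarrow> nat \<Rightarrow> real" and Tc :: real
    and pi0 gamma :: "nat \<Rightarrow> real"
    and g :: "nat \<Rightarrow> nat" and T :: "nat \<Rightarrow> nat set" and Sout :: "nat \<Rightarrow> nat set"
  defines "U \<equiv> Uk Pf Pm Tc pi0 gamma"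
  assumes M_pos: "0 < M"
    and l_le: "\<forall>i<N. l i \<le> M"
    and l_sum: "(\<Sum>i<N. l i) \<ge> M"
    and Pf: "\<forall>i<N. \<forall>k<M. 0 \<le> Pf i k \<and> Pf i k \<le> 1"
    and Pm: "\<forall>i<N. \<forall>k<M. 0 \<le> Pm i k \<and> Pm i k \<le> 1"
    and Tc: "0 \<le> Tc" "Tc < 1"
    and pi0: "\<forall>k<M. 0 \<le> pi0 k \<and> pi0 k \<le> 1"
    and gamma: "\<forall>k<M. gamma k > 0"
    and part: "valid_partition N M U g"
    and top: "valid_top N M l U g T"
    and alg: "alg_output N M l U Sout"
  shows "total M U Sout \<ge> mu N M l U g T / 2 * OPT N M l U"
proof -
  let ?Z = "\<Sum>k<M. Uzero N U k"
  have "0 < N" using l_sum M_pos by (cases N) auto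
  have Uzero_pos: "\<forall>k<M. 0 < Uzero N U k"
    using max_theta_pos max_theta_le_Uzero[OF \<open>0 < N\<close>] Tc pi0 gamma unfolding U_def
    by (meson order_less_le_trans)
  have "\<And>k A. k < M \<Longrightarrow> finite A \<Longrightarrow> 0 \<le> U k A"
    unfolding U_def using Uk_ge_theta2 theta2_nonneg gamma pi0 by (meson order_trans)
  moreover have "\<And>k A i. k < M \<Longrightarrow> finite A \<Longrightarrow> U k A \<le> U k (insert i A)"
    unfolding U_def by (rule Uk_insert_ge)
  moreover obtain Mt where "is_matching N M l Mt" "mu N M l U g T * ?Z \<le> mweight U Mt"
    using exists_matching_weight_ge_mu[OF l_sum part top Uzero_pos] by blast
  ultimately have ALG: "mu N M l U g T * ?Z \<le> total M U Sout"
    using alg_output_ge_matching[OF alg] by fastforce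
  have "OPT N M l U \<le> (\<Sum>k<M. 2 * Uzero N U k)"
    unfolding U_def using \<open>0 < N\<close> Pf Pm Tc pi0 gamma
    by (intro OPT_le_sum_bound Uk_le_two_Uzero) auto
  then have "OPT N M l U \<le> 2 * ?Z" by (simp add: sum_distrib_left)
  moreover have "1 \<le> mu N M l U g T" using M_pos part top Uzero_pos by (rule mu_ge_one)
  ultimately have "mu N M l U g T / 2 * OPT N M l U \<le> mu N M l U g T / 2 * (2 * ?Z)"
    by (intro mult_left_mono) auto
  then show ?thesis using ALG by simp
qed

end
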